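(* Let $(H,\partial)$ be a right (respectively extended) Cartan–Eilenberg system. The right couple $(A'',E^1)$ converges conditionally to the limit, i.e. $\operatorname{colim}_sH(s,\infty)=0$, if and only if the canonical map $\bar\eta\colon\operatorname{colim}_jH(i,j)\to H(i,\infty)$ is an isomorphism for some $i\in\mathbb{Z}$ (respectively some $i\in\mathbb{Z}\cup\{-\infty\}$); in that case it is an isomorphism for every $i\in\mathbb{Z}$ (respectively every $i\in\mathbb{Z}\cup\{-\infty\}$).
   Context: Let $\mathcal{A}$ be the category of $\mathbb{Z}$-graded $R$-modules. For a linearly ordered set $\mathcal{I}$, an $\mathcal{I}$-system $(H,\partial)$ consists of objects $H(i,j)$ for $i\le j$ in $\mathcal{I}$, functorial morphisms $\eta\colon H(i,j)\to H(i',j')$ (internal degree $0$) for $i\le i'$, $j\le j'$, and natural morphisms $\partial\colon H(j,k)\to H(i,j)$ (internal degree $-1$) for $i\le j\le k$, with $H(i,j)\xrightarrow{\eta}H(i,k)\xrightarrow{\eta}H(j,k)\xrightarrow{\partial}H(i,j)$ exact at each vertex. A right Cartan–Eilenberg system is a $(\mathbb{Z}\cup\{+\infty\})$-system; an extended Cartan–Eilenberg system is a $(\mathbb{Z}\cup\{\pm\infty\})$-system ($\pm\infty$ greatest/least elements). Right couple: $A''_s=H(s,\infty)$, $E^1_s=H(s-1,s)$, $\alpha_s=\eta$, $\beta_s=\partial\colon H(s,\infty)\to H(s-1,s)$, $\gamma_s=\eta\colon H(s-1,s)\to H(s-1,\infty)$. An exact couple converges conditionally to the limit if $\operatorname{colim}_sA_s=0$.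 The colimit $\operatorname{colim}_jH(i,j)$ is over integers $j\to\infty$ along $\eta$, and $\bar\eta$ is induced by $\eta\colon H(i,j)\to H(i,\infty)$. *)

theory Defs
  imports Main
begin

datatype ext = NegInf | Fin int | PosInf

instantiation ext :: linorder
begin

fun less_eq_ext :: "ext \<Rightarrow> ext \<Rightarrow> bool" where
  "less_eq_ext NegInf y = True"
| "less_eq_ext (Fin a) NegInf = False"
| "less_eq_ext (Fin a) (Fin b) = (a \<le> b)"
| "less_eq_ext (Fin a) PosInf = True"
| "less_eq_ext PosInf y = (y = PosInf)"

definition less_ext :: "ext \<Rightarrow> ext \<Rightarrow> bool" where
  "less_ext x y = (x \<le> y \<and> \<not> y \<le> x)"

instance
proof
  fix x y z :: ext
  show "(x < y) = (x \<le> y \<and> \<not> y \<le> x)" by (simp add: less_ext_def)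
  show "x \<le> x" by (cases x) auto
  show "x \<le> y \<Longrightarrow> y \<le> z \<Longrightarrow> x \<le> z"
    by (cases x; cases y; cases z) auto
  show "x \<le> y \<Longrightarrow> y \<le> x \<Longrightarrow> x = y"
    by (cases x; cases y) auto
  show "x \<le> y \<or> y \<le> x"
    by (cases x; cases y) auto
qed

end

definition right_index :: "ext set" where
  "right_index = UNIV - {NegInf}"

definition extended_index :: "ext set" where
  "extended_index = UNIV"

section \<open>Modules over a ring R (all modules live inside one ambient R-module)\<close>

definition is_module :: "('r::ring_1 \<Rightarrow> 'm::ab_group_add \<Rightarrow> 'm) \<Rightarrow> bool" where
  "is_module sc \<longleftrightarrow>
     (\<forall>a x y. sc a (x + y) = sc a x + sc a y) \<and>
     (\<forall>a b x. sc (a + b) x = sc a x + sc b x) \<and>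
     (\<forall>a b x. sc (a * b) x = sc a (sc b x)) \<and>
     (\<forall>x. sc 1 x = x)"

definition submodule :: "('r::ring_1 \<Rightarrow> 'm::ab_group_add \<Rightarrow> 'm) \<Rightarrow> 'm set \<Rightarrow> bool" where
  "submodule sc M \<longleftrightarrow> 0 \<in> M \<and> (\<forall>x\<in>M. \<forall>y\<in>M. x + y \<in> M) \<and> (\<forall>x\<in>M. - x \<in> M)
     \<and> (\<forall>a. \<forall>x\<in>M. sc a x \<in> M)"

definition linmap :: "('r::ring_1 \<Rightarrow> 'm::ab_group_add \<Rightarrow> 'm) \<Rightarrow> 'm set \<Rightarrow> 'm set \<Rightarrow> ('m \<Rightarrow> 'm) \<Rightarrow> bool" where
  "linmap sc M N f \<longleftrightarrow> f ` M \<subseteq> N \<and> (\<forall>x\<in>M. \<forall>y\<in>M. f (x + y) = f x + f y)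
     \<and> (\<forall>a. \<forall>x\<in>M. f (sc a x) = sc a (f x))"

definition exact_at :: "'m::zero set \<Rightarrow> 'm set \<Rightarrow> ('m \<Rightarrow> 'm) \<Rightarrow> ('m \<Rightarrow> 'm) \<Rightarrow> bool" where
  "exact_at M N f g \<longleftrightarrow> {y \<in> N. g y = 0} = f ` M"

text \<open>A Z-graded module is a family of submodules @ degree n (H i j n is the
  degree-n part of H(i,j)). eta i j i' j' n : H(i,j)_n \<rightarrow> H(i',j')_n,
  del i j k n : H(j,k)_n \<rightarrow> H(i,j)_(n-1).\<close>

definition I_system ::
  "('r::ring_1 \<Rightarrow> 'm::ab_group_add \<Rightarrow> 'm) \<Rightarrow> ext set \<Rightarrow> (ext \<Rightarrow> ext \<Rightarrow> int \<Rightarrow> 'm set)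
   \<Rightarrow> (ext \<Rightarrow> ext \<Rightarrow> ext \<Rightarrow> ext \<Rightarrow> int \<Rightarrow> 'm \<Rightarrow> 'm)
   \<Rightarrow> (ext \<Rightarrow> ext \<Rightarrow> ext \<Rightarrow> int \<Rightarrow> 'm \<Rightarrow> 'm) \<Rightarrow> bool" where
  "I_system sc I H eta del \<longleftrightarrow>
    (\<forall>i\<in>I. \<forall>j\<in>I. \<forall>n. i \<le> j \<longrightarrow> submodule sc (H i j n)) \<and>
    (\<forall>i\<in>I. \<forall>j\<in>I. \<forall>i'\<in>I. \<forall>j'\<in>I. \<forall>n. i \<le> j \<and> i' \<le> j' \<and> i \<le> i' \<and> j \<le> j' \<longrightarrow>
        linmap sc (H i j n) (H i' j' n) (eta i j i' j' n)) \<and>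
    (\<forall>i\<in>I. \<forall>j\<in>I. \<forall>n. \<forall>x\<in>H i j n. i \<le> j \<longrightarrow> eta i j i j n x = x) \<and>
    (\<forall>i\<in>I. \<forall>j\<in>I. \<forall>i'\<in>I. \<forall>j'\<in>I. \<forall>i''\<in>I. \<forall>j''\<in>I. \<forall>n. \<forall>x\<in>H i j n.
        i \<le> j \<and> i' \<le> j' \<and> i'' \<le> j'' \<and> i \<le> i' \<and> j \<le> j' \<and> i' \<le> i'' \<and> j' \<le> j'' \<longrightarrow>
        eta i' j' i'' j'' n (eta i j i' j' n x) = eta i j i'' j'' n x) \<and>
    (\<forall>i\<in>I. \<forall>j\<in>I. \<forall>k\<in>I. \<forall>n. i \<le> j \<and> j \<le> k \<longrightarrow>
        linmap sc (H j k n) (H i j (n - 1)) (del i j k n)) \<and>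
    (\<forall>i\<in>I. \<forall>j\<in>I. \<forall>k\<in>I. \<forall>i'\<in>I. \<forall>j'\<in>I. \<forall>k'\<in>I. \<forall>n. \<forall>x\<in>H j k n.
        i \<le> j \<and> j \<le> k \<and> i' \<le> j' \<and> j' \<le> k' \<and> i \<le> i' \<and> j \<le> j' \<and> k \<le> k' \<longrightarrow>
        eta i j i' j' (n - 1) (del i j k n x) = del i' j' k' n (eta j k j' k' n x)) \<and>
    (\<forall>i\<in>I. \<forall>j\<in>I. \<forall>k\<in>I. \<forall>n. i \<le> j \<and> j \<le> k \<longrightarrow>
        exact_at (H i j n) (H i k n) (eta i j i k n) (eta i k j k n) \<and>
        exact_at (H i k n) (H j k n) (eta i k j k n) (del i j k n) \<and>
        exact_at (H j k n) (H i j (n - 1)) (del i j k n) (eta i j i k (n - 1)))"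

definition colim_rel :: "'i::linorder set \<Rightarrow> ('i \<Rightarrow> 'm set) \<Rightarrow> ('i \<Rightarrow> 'i \<Rightarrow> 'm \<Rightarrow> 'm)
    \<Rightarrow> ('i \<times> 'm) rel" where
  "colim_rel J C f = {((a, x), (b, y)). a \<in> J \<and> b \<in> J \<and> x \<in> C a \<and> y \<in> C b \<and>
      (\<exists>c\<in>J. a \<le> c \<and> b \<le> c \<and> f a c x = f b c y)}"

definition colim :: "'i::linorder set \<Rightarrow> ('i \<Rightarrow> 'm set) \<Rightarrow> ('i \<Rightarrow> 'i \<Rightarrow> 'm \<Rightarrow> 'm)
    \<Rightarrow> ('i \<times> 'm) set set" where
  "colim J C f = (SIGMA a:J. C a) // colim_rel J C f"

text \<open>The map out of the colimit induced by a compatible cocone g a : C a \<rightarrow> T.\<close>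
definition colim_map :: "('i \<Rightarrow> 'm \<Rightarrow> 'n) \<Rightarrow> ('i \<times> 'm) set \<Rightarrow> 'n" where
  "colim_map g X = the_elem ((\<lambda>(a, x). g a x) ` X)"

definition colim_zero :: "'i::linorder set \<Rightarrow> ('i \<Rightarrow> 'm set) \<Rightarrow> ('i \<Rightarrow> 'i \<Rightarrow> 'm \<Rightarrow> 'm) \<Rightarrow> bool" where
  "colim_zero J C f \<longleftrightarrow> (\<forall>X\<in>colim J C f. \<forall>Y\<in>colim J C f. X = Y)"

definition right_couple_conv_cond ::
  "(ext \<Rightarrow> ext \<Rightarrow> int \<Rightarrow> 'm::zero set) \<Rightarrow> (ext \<Rightarrow> ext \<Rightarrow> ext \<Rightarrow> ext \<Rightarrow> int \<Rightarrow> 'm \<Rightarrow> 'm) \<Rightarrow> bool" where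
  "right_couple_conv_cond H eta \<longleftrightarrow>
     (\<forall>n. colim_zero (range Fin) (\<lambda>s. H s PosInf n) (\<lambda>s t. eta s PosInf t PosInf n))"

definition eta_bar_iso ::
  "(ext \<Rightarrow> ext \<Rightarrow> int \<Rightarrow> 'm set) \<Rightarrow> (ext \<Rightarrow> ext \<Rightarrow> ext \<Rightarrow> ext \<Rightarrow> int \<Rightarrow> 'm \<Rightarrow> 'm) \<Rightarrow> ext \<Rightarrow> bool" where
  "eta_bar_iso H eta i \<longleftrightarrow>
     (\<forall>n. bij_betw (colim_map (\<lambda>j. eta i j i PosInf n))
            (colim {j \<in> range Fin. i \<le> j} (\<lambda>j. H i j n) (\<lambda>j j'. eta i j i j' n))
            (H i PosInf n))"

end

theory Submission
  imports Defs
begin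

text \<open>For finite \<open>j \<ge> i\<close> the exact triangles of \<open>i \<le> j \<le> \<infinity>\<close> give exact sequences
  \<open>H(i,j) \<rightarrow> H(i,\<infinity>) \<rightarrow> H(j,\<infinity>) \<rightarrow> H(i,j)[-1] \<rightarrow> H(i,\<infinity>)[-1]\<close>, compatible as \<open>j\<close> grows.
  Directed colimits are exact, so in the limit
  \<open>colim\<^sub>j H(i,j) \<rightarrow> H(i,\<infinity>) \<rightarrow> colim\<^sub>j H(j,\<infinity>) \<rightarrow> colim\<^sub>j H(i,j)[-1] \<rightarrow> H(i,\<infinity>)[-1]\<close>
  is exact, and \<open>\<eta>\<close>-bar is an isomorphism in all degrees iff \<open>colim\<^sub>j H(j,\<infinity>) = 0\<close>, a condition
  not depending on \<open>i\<close>. The chase is done element-wise, using that an element vanishes in a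
  directed colimit of abelian groups iff some transition map kills it. Only the additive
  structure enters.\<close>

locale directed_system =
  fixes J :: "'i::linorder set" and C :: "'i \<Rightarrow> 'm::ab_group_add set"
    and f :: "'i \<Rightarrow> 'i \<Rightarrow> 'm \<Rightarrow> 'm"
  assumes map_closed: "\<lbrakk>a \<in> J; b \<in> J; a \<le> b; x \<in> C a\<rbrakk> \<Longrightarrow> f a b x \<in> C b"
    and map_comp: "\<lbrakk>a \<in> J; b \<in> J; c \<in> J; a \<le> b; b \<le> c; x \<in> C a\<rbrakk> \<Longrightarrow> f b c (f a b x) = f a c x"
    and zero_closed: "a \<in> J \<Longrightarrow> 0 \<in> C a"
    and diff_closed: "\<lbrakk>a \<in> J; x \<in> C a; y \<in> C a\<rbrakk> \<Longrightarrow> x - y \<in> C a"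
    and map_diff: "\<lbrakk>a \<in> J; b \<in> J; a \<le> b; x \<in> C a; y \<in> C a\<rbrakk> \<Longrightarrow> f a b (x - y) = f a b x - f a b y"
begin

lemma map_zero: "\<lbrakk>a \<in> J; b \<in> J; a \<le> b\<rbrakk> \<Longrightarrow> f a b 0 = 0"
  using map_diff[of a b 0 0] zero_closed by simp

lemma map_eq_mono:
  assumes "a \<in> J" "b \<in> J" "c \<in> J" "d \<in> J" "a \<le> c" "b \<le> c" "c \<le> d" "x \<in> C a" "y \<in> C b"
    and "f a c x = f b c y"
  shows "f a d x = f b d y"
  using map_comp[of a c d x] map_comp[of b c d y] assms by simp

lemma map_zero_mono:
  assumes "a \<in> J" "c \<in> J" "d \<in> J" "a \<le> c" "c \<le> d" "x \<in> C a" "f a c x = 0"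
  shows "f a d x = 0"
  using map_comp[of a c d x] map_zero[of c d] assms by simp

lemma colim_rel_iff:
  "((a, x), (b, y)) \<in> colim_rel J C f \<longleftrightarrow> a \<in> J \<and> b \<in> J \<and> x \<in> C a \<and> y \<in> C b \<and>
     (\<exists>c\<in>J. a \<le> c \<and> b \<le> c \<and> f a c x = f b c y)"
  by (simp add: colim_rel_def)

lemma equiv_colim_rel: "equiv (SIGMA a:J. C a) (colim_rel J C f)"
proof (rule equivI)
  show "colim_rel J C f \<subseteq> (SIGMA a:J. C a) \<times> (SIGMA a:J. C a)"
    by (auto simp: colim_rel_def)
  show "refl_on (SIGMA a:J. C a) (colim_rel J C f)"
    by (auto simp: refl_on_def colim_rel_def)
  show "sym (colim_rel J C f)"
    by (auto simp: sym_def colim_rel_def)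
  show "trans (colim_rel J C f)"
  proof (rule transI, clarify)
    fix a x b y d z
    assume "((a, x), (b, y)) \<in> colim_rel J C f" "((b, y), (d, z)) \<in> colim_rel J C f"
    then obtain c c' where ab: "a \<in> J" "b \<in> J" "x \<in> C a" "y \<in> C b" "c \<in> J" "a \<le> c" "b \<le> c"
        "f a c x = f b c y"
      and bd: "d \<in> J" "z \<in> C d" "c' \<in> J" "b \<le> c'" "d \<le> c'" "f b c' y = f d c' z"
      by (auto simp: colim_rel_iff)
    have "max c c' \<in> J" using ab bd by (simp add: max_def)
    moreover have "f a (max c c') x = f d (max c c') z"
      using map_eq_mono[of a b c "max c c'" x y] map_eq_mono[of b d c' "max c c'" y z] ab bd calculation
      by simp
    ultimately show "((a, x), (d, z)) \<in> colim_rel J C f"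
      using ab bd by (auto simp: colim_rel_iff le_max_iff_disj intro!: bexI[of _ "max c c'"])
  qed
qed

lemma colim_eq_classes: "colim J C f = {colim_rel J C f `` {(a, x)} |a x. a \<in> J \<and> x \<in> C a}"
  by (auto simp: colim_def quotient_def)

lemma colim_class_eq_iff:
  assumes "a \<in> J" "x \<in> C a" "b \<in> J" "y \<in> C b"
  shows "colim_rel J C f `` {(a, x)} = colim_rel J C f `` {(b, y)} \<longleftrightarrow>
    (\<exists>c\<in>J. a \<le> c \<and> b \<le> c \<and> f a c x = f b c y)"
  using eq_equiv_class_iff[OF equiv_colim_rel, of "(a, x)" "(b, y)"] assms by (simp add: colim_rel_iff)

lemma colim_zero_iff:
  "colim_zero J C f \<longleftrightarrow> (\<forall>a\<in>J. \<forall>x\<in>C a. \<exists>c\<in>J. a \<le> c \<and> f a c x = 0)"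
proof
  assume zero: "colim_zero J C f"
  show "\<forall>a\<in>J. \<forall>x\<in>C a. \<exists>c\<in>J. a \<le> c \<and> f a c x = 0"
  proof (intro ballI)
    fix a x assume "a \<in> J" "x \<in> C a"
    moreover have "colim_rel J C f `` {(a, x)} = colim_rel J C f `` {(a, 0)}"
      using zero \<open>a \<in> J\<close> \<open>x \<in> C a\<close> zero_closed unfolding colim_zero_def colim_eq_classes by blast
    ultimately show "\<exists>c\<in>J. a \<le> c \<and> f a c x = 0"
      by (auto simp: colim_class_eq_iff zero_closed map_zero)
  qed
next
  assume vanish: "\<forall>a\<in>J. \<forall>x\<in>C a. \<exists>c\<in>J. a \<le> c \<and> f a c x = 0"
  have "\<exists>c\<in>J. a \<le> c \<and> b \<le> c \<and> f a c x = f b c y"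
    if xy: "a \<in> J" "x \<in> C a" "b \<in> J" "y \<in> C b" for a x b y
  proof -
    obtain c c' where "c \<in> J" "a \<le> c" "f a c x = 0" "c' \<in> J" "b \<le> c'" "f b c' y = 0"
      using vanish xy by meson
    then show ?thesis
      using map_zero_mono[of a c "max c c'" x] map_zero_mono[of b c' "max c c'" y] xy
      by (intro bexI[of _ "max c c'"]) (auto simp: max_def)
  qed
  then show "colim_zero J C f"
    unfolding colim_zero_def colim_eq_classes by (clarify, subst colim_class_eq_iff) auto
qed

context
  fixes g :: "'i \<Rightarrow> 'm \<Rightarrow> 'n::ab_group_add" and T :: "'n set"
  assumes compat: "\<lbrakk>a \<in> J; c \<in> J; a \<le> c; x \<in> C a\<rbrakk> \<Longrightarrow> g c (f a c x) = g a x"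
    and cocone_closed: "\<lbrakk>a \<in> J; x \<in> C a\<rbrakk> \<Longrightarrow> g a x \<in> T"
    and cocone_diff: "\<lbrakk>a \<in> J; x \<in> C a; y \<in> C a\<rbrakk> \<Longrightarrow> g a (x - y) = g a x - g a y"
begin

lemma colim_map_class:
  assumes "a \<in> J" "x \<in> C a"
  shows "colim_map g (colim_rel J C f `` {(a, x)}) = g a x"
proof -
  have "g b y = g a x" if "((a, x), (b, y)) \<in> colim_rel J C f" for b y
    using that compat by (auto simp: colim_rel_iff) metis
  then have "(\<lambda>(b, y). g b y) ` (colim_rel J C f `` {(a, x)}) = {g a x}"
    using assms by (auto simp: colim_rel_iff intro!: image_eqI[of _ _ "(a, x)"])
  then show ?thesis by (simp add: colim_map_def)
qed

lemma cocone_zero: "a \<in> J \<Longrightarrow> g a 0 = 0"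
  using cocone_diff[of a 0 0] zero_closed by simp

lemma colim_map_image: "colim_map g ` colim J C f = (\<lambda>(a, x). g a x) ` (SIGMA a:J. C a)"
proof -
  have "colim J C f = (\<lambda>(a, x). colim_rel J C f `` {(a, x)}) ` (SIGMA a:J. C a)"
    by (auto simp: colim_def quotient_def)
  then have "colim_map g ` colim J C f = (\<lambda>p. colim_map g (colim_rel J C f `` {p})) ` (SIGMA a:J. C a)"
    by (simp add: image_image)
  also have "\<dots> = (\<lambda>(a, x). g a x) ` (SIGMA a:J. C a)"
    by (rule image_cong) (auto simp: colim_map_class)
  finally show ?thesis .
qed

lemma inj_on_colim_map_iff_pairs:
  "inj_on (colim_map g) (colim J C f) \<longleftrightarrow> (\<forall>a\<in>J. \<forall>x\<in>C a. \<forall>b\<in>J. \<forall>y\<in>C b.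
     g a x = g b y \<longrightarrow> (\<exists>c\<in>J. a \<le> c \<and> b \<le> c \<and> f a c x = f b c y))"
proof -
  have "inj_on (colim_map g) (colim J C f) \<longleftrightarrow> (\<forall>a\<in>J. \<forall>x\<in>C a. \<forall>b\<in>J. \<forall>y\<in>C b.
      colim_map g (colim_rel J C f `` {(a, x)}) = colim_map g (colim_rel J C f `` {(b, y)}) \<longrightarrow>
      colim_rel J C f `` {(a, x)} = colim_rel J C f `` {(b, y)})"
    unfolding inj_on_def colim_eq_classes by blast
  then show ?thesis
    by (simp add: colim_map_class colim_class_eq_iff)
qed

lemma inj_on_colim_map_iff:
  "inj_on (colim_map g) (colim J C f) \<longleftrightarrow>
     (\<forall>a\<in>J. \<forall>x\<in>C a. g a x = 0 \<longrightarrow> (\<exists>c\<in>J. a \<le> c \<and> f a c x = 0))"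
  unfolding inj_on_colim_map_iff_pairs
proof (intro iffI ballI impI)
  fix a x
  assume pairs: "\<forall>a\<in>J. \<forall>x\<in>C a. \<forall>b\<in>J. \<forall>y\<in>C b.
      g a x = g b y \<longrightarrow> (\<exists>c\<in>J. a \<le> c \<and> b \<le> c \<and> f a c x = f b c y)"
    and x: "a \<in> J" "x \<in> C a" "g a x = 0"
  then obtain c where "c \<in> J" "a \<le> c" "f a c x = f a c 0"
    using zero_closed cocone_zero by metis
  then show "\<exists>c\<in>J. a \<le> c \<and> f a c x = 0"
    using map_zero x by auto
next
  fix a x b y
  assume kernel: "\<forall>a\<in>J. \<forall>x\<in>C a. g a x = 0 \<longrightarrow> (\<exists>c\<in>J. a \<le> c \<and> f a c x = 0)"
    and xy: "a \<in> J" "x \<in> C a" "b \<in> J" "y \<in> C b" "g a x = g b y"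
  define m where "m = max a b"
  have m: "m \<in> J" "a \<le> m" "b \<le> m"
    using xy by (auto simp: m_def max_def)
  have "f a m x - f b m y \<in> C m"
    using m xy by (simp add: diff_closed map_closed)
  moreover have "g m (f a m x - f b m y) = 0"
    using m xy by (simp add: cocone_diff map_closed compat)
  ultimately obtain c where c: "c \<in> J" "m \<le> c" "f m c (f a m x - f b m y) = 0"
    using kernel m by blast
  then have "f a c x = f b c y"
    using m xy by (simp add: map_diff map_closed map_comp)
  then show "\<exists>c\<in>J. a \<le> c \<and> b \<le> c \<and> f a c x = f b c y"
    using c m by (meson order.trans)
qed

lemma bij_betw_colim_map_iff:
  "bij_betw (colim_map g) (colim J C f) T \<longleftrightarrow>
     (\<forall>t\<in>T. \<exists>a\<in>J. \<exists>x\<in>C a. g a x = t) \<and>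
     (\<forall>a\<in>J. \<forall>x\<in>C a. g a x = 0 \<longrightarrow> (\<exists>c\<in>J. a \<le> c \<and> f a c x = 0))"
  unfolding bij_betw_def inj_on_colim_map_iff colim_map_image using cocone_closed by (auto; metis)

end

end

lemma submodule_zero: "submodule sc M \<Longrightarrow> 0 \<in> M"
  by (simp add: submodule_def)

lemma submodule_diff: "\<lbrakk>submodule sc M; x \<in> M; y \<in> M\<rbrakk> \<Longrightarrow> x - y \<in> M"
  unfolding submodule_def by (metis diff_conv_add_uminus)

lemma linmap_closed: "\<lbrakk>linmap sc M N f; x \<in> M\<rbrakk> \<Longrightarrow> f x \<in> N"
  by (auto simp: linmap_def)

lemma linmap_zero:
  assumes "linmap sc M N f" "submodule sc M"
  shows "f 0 = 0"
proof -
  have "\<forall>x\<in>M. \<forall>y\<in>M. f (x + y) = f x + f y" "0 \<in> M"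
    using assms by (simp_all add: linmap_def submodule_zero)
  then have "f (0 + 0) = f 0 + f 0" by blast
  then show ?thesis by simp
qed

lemma linmap_diff:
  assumes f: "linmap sc M N f" and M: "submodule sc M" and "x \<in> M" "y \<in> M"
  shows "f (x - y) = f x - f y"
proof -
  have add: "f (u + v) = f u + f v" if "u \<in> M" "v \<in> M" for u v
    using f that by (simp add: linmap_def)
  have "- y \<in> M" using M \<open>y \<in> M\<close> by (simp add: submodule_def)
  then have "f y + f (- y) = 0"
    using add[of y "- y"] linmap_zero[OF f M] \<open>y \<in> M\<close> by simp
  then show ?thesis
    using add[of x "- y"] \<open>x \<in> M\<close> \<open>- y \<in> M\<close> by (simp add: add_eq_0_iff)
qed

lemma le_PosInf [simp]: "(i::ext) \<le> PosInf"
  by (cases i) auto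

lemma le_Fin_trans: "\<lbrakk>i \<le> Fin j; j \<le> k\<rbrakk> \<Longrightarrow> i \<le> Fin k"
  using order.trans[of i "Fin j" "Fin k"] by simp

lemma exists_Fin_above: "i \<noteq> PosInf \<Longrightarrow> \<exists>j\<ge>s. i \<le> Fin j"
proof (cases i)
  case (Fin k)
  then show ?thesis by (intro exI[of _ "max s k"]) simp
qed auto

locale cartan_eilenberg_system =
  fixes sc :: "'r::ring_1 \<Rightarrow> 'm::ab_group_add \<Rightarrow> 'm"
    and I :: "ext set"
    and H :: "ext \<Rightarrow> ext \<Rightarrow> int \<Rightarrow> 'm set"
    and eta :: "ext \<Rightarrow> ext \<Rightarrow> ext \<Rightarrow> ext \<Rightarrow> int \<Rightarrow> 'm \<Rightarrow> 'm"
    and del :: "ext \<Rightarrow> ext \<Rightarrow> ext \<Rightarrow> int \<Rightarrow> 'm \<Rightarrow> 'm"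
  assumes I_system: "I_system sc I H eta del"
    and Fin_in_I [simp]: "Fin k \<in> I"
    and PosInf_in_I [simp]: "PosInf \<in> I"
begin

lemmas I_system_unfolded = I_system[unfolded I_system_def]

lemma H_submodule: "\<lbrakk>i \<in> I; j \<in> I; i \<le> j\<rbrakk> \<Longrightarrow> submodule sc (H i j n)"
  using I_system_unfolded[THEN conjunct1] by blast

lemma eta_linmap:
  "\<lbrakk>i \<in> I; j \<in> I; i' \<in> I; j' \<in> I; i \<le> j; i' \<le> j'; i \<le> i'; j \<le> j'\<rbrakk>
   \<Longrightarrow> linmap sc (H i j n) (H i' j' n) (eta i j i' j' n)"
  using I_system_unfolded[THEN conjunct2, THEN conjunct1] by blast

lemma eta_comp:
  "\<lbrakk>i \<in> I; j \<in> I; i' \<in> I; j' \<in> I; i'' \<in> I; j'' \<in> I; i \<le> j; i' \<le> j'; i'' \<le> j'';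
    i \<le> i'; j \<le> j'; i' \<le> i''; j' \<le> j''; x \<in> H i j n\<rbrakk>
   \<Longrightarrow> eta i' j' i'' j'' n (eta i j i' j' n x) = eta i j i'' j'' n x"
  using I_system_unfolded[THEN conjunct2, THEN conjunct2, THEN conjunct2, THEN conjunct1] by blast

lemma del_linmap:
  "\<lbrakk>i \<in> I; j \<in> I; k \<in> I; i \<le> j; j \<le> k\<rbrakk> \<Longrightarrow> linmap sc (H j k n) (H i j (n - 1)) (del i j k n)"
  using I_system_unfolded[THEN conjunct2, THEN conjunct2, THEN conjunct2, THEN conjunct2,
      THEN conjunct1]
  by blast

lemma eta_del:
  "\<lbrakk>i \<in> I; j \<in> I; k \<in> I; i' \<in> I; j' \<in> I; k' \<in> I; i \<le> j; j \<le> k; i' \<le> j'; j' \<le> k';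
    i \<le> i'; j \<le> j'; k \<le> k'; x \<in> H j k n\<rbrakk>
   \<Longrightarrow> eta i j i' j' (n - 1) (del i j k n x) = del i' j' k' n (eta j k j' k' n x)"
  using I_system_unfolded[THEN conjunct2, THEN conjunct2, THEN conjunct2, THEN conjunct2,
      THEN conjunct2, THEN conjunct1]
  by blast

lemma exact_triangle:
  "\<lbrakk>i \<in> I; j \<in> I; k \<in> I; i \<le> j; j \<le> k\<rbrakk> \<Longrightarrow>
    exact_at (H i j n) (H i k n) (eta i j i k n) (eta i k j k n) \<and>
    exact_at (H i k n) (H j k n) (eta i k j k n) (del i j k n) \<and>
    exact_at (H j k n) (H i j (n - 1)) (del i j k n) (eta i j i k (n - 1))"
  using I_system_unfolded[THEN conjunct2, THEN conjunct2, THEN conjunct2, THEN conjunct2,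
      THEN conjunct2, THEN conjunct2]
  by blast

lemma zero_in_H: "\<lbrakk>i \<in> I; j \<in> I; i \<le> j\<rbrakk> \<Longrightarrow> 0 \<in> H i j n"
  using H_submodule submodule_zero by blast

lemma diff_in_H: "\<lbrakk>i \<in> I; j \<in> I; i \<le> j; x \<in> H i j n; y \<in> H i j n\<rbrakk> \<Longrightarrow> x - y \<in> H i j n"
  using H_submodule submodule_diff by blast

lemma eta_in_H:
  "\<lbrakk>i \<in> I; j \<in> I; i' \<in> I; j' \<in> I; i \<le> j; i' \<le> j'; i \<le> i'; j \<le> j'; x \<in> H i j n\<rbrakk>
   \<Longrightarrow> eta i j i' j' n x \<in> H i' j' n"
  using eta_linmap linmap_closed by blast

lemma eta_diff:
  "\<lbrakk>i \<in> I; j \<in> I; i' \<in> I; j' \<in> I; i \<le> j; i' \<le> j'; i \<le> i'; j \<le> j'; x \<in> H i j n; y \<in> H i j n\<rbrakk>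
   \<Longrightarrow> eta i j i' j' n (x - y) = eta i j i' j' n x - eta i j i' j' n y"
  using eta_linmap H_submodule linmap_diff by blast

lemma del_in_H:
  "\<lbrakk>i \<in> I; j \<in> I; k \<in> I; i \<le> j; j \<le> k; x \<in> H j k n\<rbrakk> \<Longrightarrow> del i j k n x \<in> H i j (n - 1)"
  using del_linmap linmap_closed by blast

lemma del_zero: "\<lbrakk>i \<in> I; j \<in> I; k \<in> I; i \<le> j; j \<le> k\<rbrakk> \<Longrightarrow> del i j k n 0 = 0"
  using del_linmap H_submodule linmap_zero by blast

lemma eta_comp_eta_zero:
  "\<lbrakk>i \<in> I; j \<in> I; k \<in> I; i \<le> j; j \<le> k; x \<in> H i j n\<rbrakk> \<Longrightarrow> eta i k j k n (eta i j i k n x) = 0"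
  using exact_triangle[of i j k n] unfolding exact_at_def by blast

lemma ker_eta_image_eta:
  "\<lbrakk>i \<in> I; j \<in> I; k \<in> I; i \<le> j; j \<le> k; y \<in> H i k n; eta i k j k n y = 0\<rbrakk>
   \<Longrightarrow> \<exists>x\<in>H i j n. y = eta i j i k n x"
  using exact_triangle[of i j k n] unfolding exact_at_def by blast

lemma ker_del_image_eta:
  "\<lbrakk>i \<in> I; j \<in> I; k \<in> I; i \<le> j; j \<le> k; y \<in> H j k n; del i j k n y = 0\<rbrakk>
   \<Longrightarrow> \<exists>x\<in>H i k n. y = eta i k j k n x"
  using exact_triangle[of i j k n] unfolding exact_at_def by blast

lemma eta_comp_del_zero:
  "\<lbrakk>i \<in> I; j \<in> I; k \<in> I; i \<le> j; j \<le> k; x \<in> H j k n\<rbrakk> \<Longrightarrow> eta i j i k (n - 1) (del i j k n x) = 0"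
  using exact_triangle[of i j k n] unfolding exact_at_def by blast

lemma ker_eta_image_del:
  "\<lbrakk>i \<in> I; j \<in> I; k \<in> I; i \<le> j; j \<le> k; y \<in> H i j (n - 1); eta i j i k (n - 1) y = 0\<rbrakk>
   \<Longrightarrow> \<exists>x\<in>H j k n. y = del i j k n x"
  using exact_triangle[of i j k n] unfolding exact_at_def by blast

definition tails_vanish :: "int \<Rightarrow> bool" where
  "tails_vanish n \<longleftrightarrow>
     (\<forall>s. \<forall>y\<in>H (Fin s) PosInf n. \<exists>t\<ge>s. eta (Fin s) PosInf (Fin t) PosInf n y = 0)"

definition eta_bar_surj :: "ext \<Rightarrow> int \<Rightarrow> bool" where
  "eta_bar_surj i n \<longleftrightarrow>
     (\<forall>y\<in>H i PosInf n. \<exists>j. i \<le> Fin j \<and> (\<exists>x\<in>H i (Fin j) n. eta i (Fin j) i PosInf n x = y))"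

definition eta_bar_inj :: "ext \<Rightarrow> int \<Rightarrow> bool" where
  "eta_bar_inj i n \<longleftrightarrow>
     (\<forall>j. \<forall>x\<in>H i (Fin j) n. i \<le> Fin j \<and> eta i (Fin j) i PosInf n x = 0 \<longrightarrow>
        (\<exists>k\<ge>j. eta i (Fin j) i (Fin k) n x = 0))"

lemma directed_system_tails:
  "directed_system (range Fin) (\<lambda>s. H s PosInf n) (\<lambda>s t. eta s PosInf t PosInf n)"
  by unfold_locales (auto simp: eta_in_H eta_comp zero_in_H diff_in_H eta_diff)

lemma directed_system_row:
  assumes "i \<in> I"
  shows "directed_system {j \<in> range Fin. i \<le> j} (\<lambda>j. H i j n) (\<lambda>j j'. eta i j i j' n)"
  using assms by unfold_locales (auto simp: eta_in_H eta_comp zero_in_H diff_in_H eta_diff)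

lemma right_couple_conv_cond_iff: "right_couple_conv_cond H eta \<longleftrightarrow> (\<forall>n. tails_vanish n)"
  by (auto simp: right_couple_conv_cond_def tails_vanish_def
      directed_system.colim_zero_iff[OF directed_system_tails])

lemma eta_bar_inj_iff_colim:
  "eta_bar_inj i n \<longleftrightarrow> (\<forall>a\<in>{j \<in> range Fin. i \<le> j}. \<forall>x\<in>H i a n.
     eta i a i PosInf n x = 0 \<longrightarrow> (\<exists>c\<in>{j \<in> range Fin. i \<le> j}. a \<le> c \<and> eta i a i c n x = 0))"
  (is "_ \<longleftrightarrow> ?colim")
proof
  assume inj: "eta_bar_inj i n"
  show ?colim
  proof (intro ballI impI)
    fix a x assume a: "a \<in> {j \<in> range Fin. i \<le> j}" and "x \<in> H i a n" "eta i a i PosInf n x = 0"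
    moreover obtain j where j: "a = Fin j" using a by blast
    ultimately obtain k where "j \<le> k" "eta i a i (Fin k) n x = 0"
      using inj a unfolding eta_bar_inj_def by blast
    then show "\<exists>c\<in>{j \<in> range Fin. i \<le> j}. a \<le> c \<and> eta i a i c n x = 0"
      using a j le_Fin_trans by auto
  qed
next
  assume ?colim
  then show "eta_bar_inj i n"
    unfolding eta_bar_inj_def by fastforce
qed

lemma eta_bar_iso_iff:
  assumes i: "i \<in> I"
  shows "eta_bar_iso H eta i \<longleftrightarrow> (\<forall>n. eta_bar_surj i n \<and> eta_bar_inj i n)"
proof -
  have "bij_betw (colim_map (\<lambda>j. eta i j i PosInf n))
      (colim {j \<in> range Fin. i \<le> j} (\<lambda>j. H i j n) (\<lambda>j j'. eta i j i j' n)) (H i PosInf n)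
    \<longleftrightarrow> eta_bar_surj i n \<and> eta_bar_inj i n" for n
  proof (subst directed_system.bij_betw_colim_map_iff[OF directed_system_row[OF i]])
    show "eta i c i PosInf n (eta i a i c n x) = eta i a i PosInf n x"
      if "a \<in> {j \<in> range Fin. i \<le> j}" "c \<in> {j \<in> range Fin. i \<le> j}" "a \<le> c" "x \<in> H i a n"
      for a c x
      using that i by (auto simp: eta_comp)
    show "eta i a i PosInf n x \<in> H i PosInf n" if "a \<in> {j \<in> range Fin. i \<le> j}" "x \<in> H i a n" for a x
      using that i by (auto simp: eta_in_H)
    show "eta i a i PosInf n (x - y) = eta i a i PosInf n x - eta i a i PosInf n y"
      if "a \<in> {j \<in> range Fin. i \<le> j}" "x \<in> H i a n" "y \<in> H i a n" for a x y
      using that i by (auto simp: eta_diff)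
  qed (auto simp: eta_bar_surj_def eta_bar_inj_iff_colim)
  then show ?thesis
    by (simp add: eta_bar_iso_def)
qed

lemma eta_bar_surj_if_tails_vanish:
  assumes i: "i \<in> I" "i \<noteq> PosInf" and vanish: "tails_vanish n"
  shows "eta_bar_surj i n"
  unfolding eta_bar_surj_def
proof
  fix y assume y: "y \<in> H i PosInf n"
  obtain j where j: "i \<le> Fin j"
    using exists_Fin_above[OF i(2)] by blast
  have "eta i PosInf (Fin j) PosInf n y \<in> H (Fin j) PosInf n"
    using i j y by (simp add: eta_in_H)
  then obtain k where k: "j \<le> k"
    and "eta (Fin j) PosInf (Fin k) PosInf n (eta i PosInf (Fin j) PosInf n y) = 0"
    using vanish unfolding tails_vanish_def by blast
  moreover have ik: "i \<le> Fin k"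
    using j k by (rule le_Fin_trans)
  ultimately have "eta i PosInf (Fin k) PosInf n y = 0"
    using i j y by (simp add: eta_comp)
  then obtain x where "x \<in> H i (Fin k) n" "y = eta i (Fin k) i PosInf n x"
    using ker_eta_image_eta[of i "Fin k" PosInf y n] i ik y by auto
  then show "\<exists>j. i \<le> Fin j \<and> (\<exists>x\<in>H i (Fin j) n. eta i (Fin j) i PosInf n x = y)"
    using ik by blast
qed

lemma eta_bar_inj_if_tails_vanish:
  assumes i: "i \<in> I" and vanish: "tails_vanish (n + 1)"
  shows "eta_bar_inj i n"
  unfolding eta_bar_inj_def
proof (intro allI ballI impI)
  fix j x assume x: "x \<in> H i (Fin j) n" and "i \<le> Fin j \<and> eta i (Fin j) i PosInf n x = 0"
  then have ij: "i \<le> Fin j" and "eta i (Fin j) i PosInf (n + 1 - 1) x = 0"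
    by simp_all
  then obtain w where w: "w \<in> H (Fin j) PosInf (n + 1)" and xw: "x = del i (Fin j) PosInf (n + 1) w"
    using ker_eta_image_del[of i "Fin j" PosInf x "n + 1"] i x by auto
  obtain k where k: "j \<le> k" and "eta (Fin j) PosInf (Fin k) PosInf (n + 1) w = 0"
    using vanish w unfolding tails_vanish_def by blast
  then have "eta i (Fin j) i (Fin k) (n + 1 - 1) x = 0"
    using eta_del[of i "Fin j" PosInf i "Fin k" PosInf w "n + 1"] i ij w le_Fin_trans[OF ij k]
    by (simp add: xw del_zero)
  then show "\<exists>k\<ge>j. eta i (Fin j) i (Fin k) n x = 0"
    using k by auto
qed

lemma eta_bar_surj_above:
  assumes i: "i \<in> I" and surj: "eta_bar_surj i n" and y: "y \<in> H i PosInf n"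
  shows "\<exists>k\<ge>d. \<exists>x\<in>H i (Fin k) n. eta i (Fin k) i PosInf n x = y"
proof -
  obtain j x where j: "i \<le> Fin j" and x: "x \<in> H i (Fin j) n" and y_eq: "eta i (Fin j) i PosInf n x = y"
    using surj y unfolding eta_bar_surj_def by blast
  define k where "k = max d j"
  have ik: "i \<le> Fin k"
    using le_Fin_trans[OF j] by (simp add: k_def)
  have "eta i (Fin j) i (Fin k) n x \<in> H i (Fin k) n"
    and "eta i (Fin k) i PosInf n (eta i (Fin j) i (Fin k) n x) = y"
    and "d \<le> k"
    using i j ik x y_eq by (simp_all add: k_def eta_in_H eta_comp)
  then show ?thesis
    by blast
qed

lemma ker_del_vanishes_if_eta_bar_surj:
  assumes i: "i \<in> I" and surj: "eta_bar_surj i n" and id: "i \<le> Fin d"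
    and w: "w \<in> H (Fin d) PosInf n" and "del i (Fin d) PosInf n w = 0"
  shows "\<exists>e\<ge>d. eta (Fin d) PosInf (Fin e) PosInf n w = 0"
proof -
  obtain h where h: "h \<in> H i PosInf n" and wh: "w = eta i PosInf (Fin d) PosInf n h"
    using ker_del_image_eta[of i "Fin d" PosInf w n] assms by auto
  obtain e x where e: "d \<le> e" and x: "x \<in> H i (Fin e) n" and hx: "eta i (Fin e) i PosInf n x = h"
    using eta_bar_surj_above[OF i surj h] by blast
  have "eta i PosInf (Fin e) PosInf n h = 0"
    using eta_comp_eta_zero[of i "Fin e" PosInf x n] i le_Fin_trans[OF id e] x hx by simp
  then have "eta (Fin d) PosInf (Fin e) PosInf n w = 0"
    using i id e h by (simp add: wh eta_comp)
  then show ?thesis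
    using e by blast
qed

lemma tails_vanish_if_eta_bar_surj_inj:
  assumes i: "i \<in> I" "i \<noteq> PosInf" and surj: "eta_bar_surj i n" and inj: "eta_bar_inj i (n - 1)"
  shows "tails_vanish n"
  unfolding tails_vanish_def
proof (intro allI ballI)
  fix s y assume y: "y \<in> H (Fin s) PosInf n"
  obtain s' where s': "s \<le> s'" "i \<le> Fin s'"
    using exists_Fin_above[OF i(2)] by blast
  define y' where "y' = eta (Fin s) PosInf (Fin s') PosInf n y"
  have y': "y' \<in> H (Fin s') PosInf n"
    using y s' by (simp add: y'_def eta_in_H)
  have "del i (Fin s') PosInf n y' \<in> H i (Fin s') (n - 1)"
    and "eta i (Fin s') i PosInf (n - 1) (del i (Fin s') PosInf n y') = 0"
    using i s' y' by (simp_all add: del_in_H eta_comp_del_zero)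
  then obtain d where d: "s' \<le> d"
    and "eta i (Fin s') i (Fin d) (n - 1) (del i (Fin s') PosInf n y') = 0"
    using inj s' unfolding eta_bar_inj_def by blast
  moreover define w where "w = eta (Fin s') PosInf (Fin d) PosInf n y'"
  moreover have id: "i \<le> Fin d"
    using s'(2) d by (rule le_Fin_trans)
  ultimately have "del i (Fin d) PosInf n w = 0"
    using eta_del[of i "Fin s'" PosInf i "Fin d" PosInf y' n] i s' y' by simp
  moreover have "w \<in> H (Fin d) PosInf n"
    using y' d by (simp add: w_def eta_in_H)
  ultimately obtain e where e: "d \<le> e" and "eta (Fin d) PosInf (Fin e) PosInf n w = 0"
    using ker_del_vanishes_if_eta_bar_surj[OF i(1) surj id] by blast
  then have "eta (Fin s) PosInf (Fin e) PosInf n y = 0"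
    using y s' d e by (simp add: w_def y'_def eta_comp)
  then show "\<exists>t\<ge>s. eta (Fin s) PosInf (Fin t) PosInf n y = 0"
    using s' d e by (intro exI[of _ e]) simp
qed

lemma right_couple_conv_cond_iff_eta_bar_iso:
  assumes i: "i \<in> I" "i \<noteq> PosInf"
  shows "right_couple_conv_cond H eta \<longleftrightarrow> eta_bar_iso H eta i"
proof
  assume "right_couple_conv_cond H eta"
  then have "tails_vanish n" for n
    by (simp add: right_couple_conv_cond_iff)
  then show "eta_bar_iso H eta i"
    using eta_bar_surj_if_tails_vanish eta_bar_inj_if_tails_vanish i by (simp add: eta_bar_iso_iff)
next
  assume "eta_bar_iso H eta i"
  then have "eta_bar_surj i n" "eta_bar_inj i n" for n
    using i by (simp_all add: eta_bar_iso_iff)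
  then show "right_couple_conv_cond H eta"
    using tails_vanish_if_eta_bar_surj_inj i by (simp add: right_couple_conv_cond_iff)
qed

end

theorem proposition6p4:
  fixes sc :: "'r::ring_1 \<Rightarrow> 'm::ab_group_add \<Rightarrow> 'm"
    and I :: "ext set"
    and H :: "ext \<Rightarrow> ext \<Rightarrow> int \<Rightarrow> 'm set"
    and eta :: "ext \<Rightarrow> ext \<Rightarrow> ext \<Rightarrow> ext \<Rightarrow> int \<Rightarrow> 'm \<Rightarrow> 'm"
    and del :: "ext \<Rightarrow> ext \<Rightarrow> ext \<Rightarrow> int \<Rightarrow> 'm \<Rightarrow> 'm"
  assumes "is_module sc"
    and "I = right_index \<or> I = extended_index"
    and "I_system sc I H eta del"
  shows "(right_couple_conv_cond H eta \<longleftrightarrow> (\<exists>i\<in>I - {PosInf}. eta_bar_iso H eta i))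
       \<and> (right_couple_conv_cond H eta \<longrightarrow> (\<forall>i\<in>I - {PosInf}. eta_bar_iso H eta i))"
proof -
  have "Fin k \<in> I" "PosInf \<in> I" for k
    using assms(2) by (auto simp: right_index_def extended_index_def)
  then interpret cartan_eilenberg_system sc I H eta del
    using assms(3) by unfold_locales
  have "Fin 0 \<in> I - {PosInf}"
    by simp
  then show ?thesis
    using right_couple_conv_cond_iff_eta_bar_iso by blast
qed

end
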